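(* Let $X\in\mathbb R^{n\times p}$ have unit $\ell_2$-norm columns and coherence $\mu$. Let $T_0\subset\{1,\dots,p\}$ with $|T_0|=s_0$, let $\lambda_1\ge\dots\ge\lambda_{s_0}$ be the $s_0$ largest eigenvalues of $X_{T_0}X_{T_0}^t$, and let $j\notin T_0$. Let $\tilde\lambda_1\ge\lambda_1$ with $\tilde\lambda_1>1$. Then $$ \lambda_1\big(X_{T_0}X_{T_0}^t+X_jX_j^t\big)\le\tilde\lambda_1+\epsilon_{s_0,\max},\qquad \epsilon_{s_0,\max}=\frac12\cdot\frac{s_0^3\mu^2\|X_{T_0}\|^2+4s_0^{3/2}\mu\|X_{T_0}\|\tilde\lambda_1}{2(\lambda_1-1)}. $$
   Context: $\mu=\max_{k<l}|\langle X_k,X_l\rangle|$ is the coherence of $X$, $X_j$ denotes the $j$-th column, $X_{T_0}$ the submatrix with columns indexed by $T_0$, $\|\cdot\|$ the operator norm, and $\lambda_k(A)$ the $k$-th largest eigenvalue of a symmetric matrix $A$. *)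

theory Defs
  imports "HOL-Analysis.Analysis"
begin

text \<open>Eigenvalues of a real square matrix, and the largest one
  (for symmetric matrices the set of eigenvalues is finite, nonempty and real).\<close>
definition eigenvalues :: "real^'n^'n \<Rightarrow> real set" where
  "eigenvalues A = {l. \<exists>v. v \<noteq> 0 \<and> A *v v = l *\<^sub>R v}"

definition lambda_max :: "real^'n^'n \<Rightarrow> real" where
  "lambda_max A = Max (eigenvalues A)"

definition coherence :: "real^'p^'n \<Rightarrow> real" where
  "coherence X = Max (insert 0 {\<bar>column k X \<bullet> column l X\<bar> | k l. k \<noteq> l})"

text \<open>The submatrix X_T, represented as the n x p matrix whose columns outside T
  are zero (same products X_T X_T^t and same operator norm as the true submatrix).\<close>
definition colsel :: "real^'p^'n \<Rightarrow> 'p set \<Rightarrow> real^'p^'n" where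
  "colsel X T = (\<chi> i j. if j \<in> T then X $ i $ j else 0)"

definition outer :: "real^'n \<Rightarrow> real^'n^'n" where
  "outer x = (\<chi> i k. x $ i * x $ k)"

end

theory Submission
  imports Defs
begin

text \<open>Write P = X_T0, x = X_j, \<lambda> = \<lambda>_1(P P^t), and let v be a top eigenvector of
  P P^t + x x^t with eigenvalue \<nu> > \<lambda>. With y = P^t v, t = x \<bullet> v and c = P^t x the
  eigen-equation P y + t x = \<nu> v gives c \<bullet> y = (\<nu> - 1) t and, since |P y|^2 \<le> \<lambda> |y|^2,
  (\<nu> - \<lambda>) |y|^2 \<le> (\<nu> - 1) t^2 = t (c \<bullet> y) \<le> |t| |c| |y|. Hence
  (\<nu> - 1) (\<nu> - \<lambda>) \<le> |c|^2 \<le> s0 \<mu>^2, because j \<notin> T0 makes every entry of c an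
  inner product of two distinct columns. If T0 \<noteq> {}, a unit column of P forces \<lambda> \<ge> 1, so
  \<lambda> > 1 and \<nu> \<le> \<lambda> + s0 \<mu>^2 / (\<lambda> - 1), which is below the stated bound; if T0 = {} then
  c = 0 and \<nu> \<le> max \<lambda> 1.\<close>

lemma linear_coeff_zero_if_quadratic_nonneg:
  fixes a b :: real
  assumes "\<And>s. 0 \<le> 2 * s * a + s^2 * b"
  shows "a = 0"
proof (rule ccontr)
  assume "a \<noteq> 0"
  define c where "c = \<bar>b\<bar> + 1"
  define s where "s = - a / c"
  have "c > 0" by (simp add: c_def add_nonneg_pos)
  have "0 \<le> 2 * s * a + s^2 * b" by (rule assms)
  also have "\<dots> \<le> 2 * s * a + s^2 * c" by (simp add: c_def mult_left_mono)
  also have "\<dots> = - (a^2 / c)"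
    using \<open>c > 0\<close> by (simp add: s_def field_simps power2_eq_square)
  also have "\<dots> < 0" using \<open>a \<noteq> 0\<close> \<open>c > 0\<close> by simp
  finally show False by simp
qed

lemma inner_matrix_vector_transpose:
  fixes P :: "real^'m^'n"
  shows "(P *v y) \<bullet> w = y \<bullet> (transpose P *v w)"
  by (metis dot_lmul_matrix inner_commute transpose_matrix_vector)

lemma inner_symmetric_matrix_vector:
  fixes A :: "real^'n^'n"
  assumes "transpose A = A"
  shows "u \<bullet> (A *v w) = w \<bullet> (A *v u)"
  by (metis assms inner_commute inner_matrix_vector_transpose)

lemma quadratic_form_attains_max_on_sphere:
  fixes A :: "real^'n^'n"
  obtains u where "norm u = 1" and "\<And>v. v \<bullet> (A *v v) \<le> (u \<bullet> (A *v u)) * (norm v)^2"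
proof -
  have cont: "continuous_on (sphere 0 1) (\<lambda>v::real^'n. v \<bullet> (A *v v))"
    by (intro continuous_intros)
  have "sphere (0::real^'n) 1 \<noteq> {}"
    using norm_axis_1[of undefined] by (metis mem_sphere_0 empty_iff)
  then obtain u where u: "u \<in> sphere 0 1"
    and umax: "\<And>w. w \<in> sphere 0 1 \<Longrightarrow> w \<bullet> (A *v w) \<le> u \<bullet> (A *v u)"
    using continuous_attains_sup[OF compact_sphere _ cont] by blast
  have "v \<bullet> (A *v v) \<le> (u \<bullet> (A *v u)) * (norm v)^2" for v
  proof (cases "v = 0")
    case False
    define w where "w = v /\<^sub>R norm v"
    have "v \<bullet> (A *v v) = (norm v)^2 * (w \<bullet> (A *v w))"
      using False by (simp add: w_def matrix_vector_mult_scaleR power2_eq_square field_simps)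
    also have "\<dots> \<le> (norm v)^2 * (u \<bullet> (A *v u))"
      using False by (intro mult_left_mono umax) (simp_all add: w_def)
    finally show ?thesis by (simp add: mult.commute)
  qed simp
  with u that show ?thesis by simp
qed

text \<open>Perturbing the maximiser u along the residual r = m u - A u gives a quadratic in s
  whose linear coefficient is 2 (r \<bullet> r); nonnegativity forces r = 0.\<close>
lemma rayleigh_maximiser_is_eigenvector:
  fixes A :: "real^'n^'n"
  assumes sym: "transpose A = A" and "norm u = 1"
    and max: "\<And>v. v \<bullet> (A *v v) \<le> (u \<bullet> (A *v u)) * (norm v)^2"
  shows "A *v u = (u \<bullet> (A *v u)) *\<^sub>R u"
proof -
  define m where "m = u \<bullet> (A *v u)"
  define r where "r = m *\<^sub>R u - A *v u"
  have gap_nonneg: "0 \<le> w \<bullet> (m *\<^sub>R w - A *v w)" for w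
    using max[of w] by (simp add: m_def inner_diff_right power2_norm_eq_inner)
  have "0 \<le> 2 * s * (r \<bullet> r) + s^2 * (r \<bullet> (m *\<^sub>R r - A *v r))" for s
  proof -
    have "0 \<le> (u + s *\<^sub>R r) \<bullet> (m *\<^sub>R (u + s *\<^sub>R r) - A *v (u + s *\<^sub>R r))"
      by (rule gap_nonneg)
    also have "\<dots> = u \<bullet> (m *\<^sub>R u - A *v u) + s * (u \<bullet> (m *\<^sub>R r - A *v r))
        + s * (r \<bullet> (m *\<^sub>R u - A *v u)) + s^2 * (r \<bullet> (m *\<^sub>R r - A *v r))"
      by (simp add: algebra_simps inner_add_left inner_add_right inner_diff_right
          matrix_vector_right_distrib matrix_vector_mult_scaleR power2_eq_square)
    also have "u \<bullet> (m *\<^sub>R u - A *v u) = 0"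
      using \<open>norm u = 1\<close> by (simp add: m_def inner_diff_right power2_norm_eq_inner[symmetric])
    also have "u \<bullet> (m *\<^sub>R r - A *v r) = r \<bullet> (m *\<^sub>R u - A *v u)"
      using inner_symmetric_matrix_vector[OF sym, of u r]
      by (simp add: inner_diff_right inner_commute)
    also have "r \<bullet> (m *\<^sub>R u - A *v u) = r \<bullet> r" by (simp add: r_def)
    finally show ?thesis by (simp add: algebra_simps)
  qed
  then have "r \<bullet> r = 0" by (rule linear_coeff_zero_if_quadratic_nonneg)
  then show ?thesis by (simp add: r_def m_def)
qed

lemma eigenvalue_le_quadratic_form_bound:
  fixes A :: "real^'n^'n"
  assumes "l \<in> eigenvalues A" and bound: "\<And>v. v \<bullet> (A *v v) \<le> m * (norm v)^2"
  shows "l \<le> m"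
proof -
  obtain v where "v \<noteq> 0" and "A *v v = l *\<^sub>R v"
    using assms(1) by (auto simp: eigenvalues_def)
  then have "l * (norm v)^2 \<le> m * (norm v)^2"
    using bound[of v] by (simp add: power2_norm_eq_inner)
  with \<open>v \<noteq> 0\<close> show ?thesis by simp
qed

lemma symmetric_eigenvectors_orthogonal:
  fixes A :: "real^'n^'n"
  assumes "transpose A = A" and "A *v u = a *\<^sub>R u" and "A *v v = b *\<^sub>R v" and "a \<noteq> b"
  shows "u \<bullet> v = 0"
proof -
  have "a * (u \<bullet> v) = b * (u \<bullet> v)"
    using inner_symmetric_matrix_vector[OF assms(1), of v u] assms(2,3)
    by (simp add: inner_commute)
  with \<open>a \<noteq> b\<close> show ?thesis by simp
qed

lemma finite_eigenvalues_symmetric: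
  fixes A :: "real^'n^'n"
  assumes sym: "transpose A = A"
  shows "finite (eigenvalues A)"
proof -
  define f where "f l = (SOME v. v \<noteq> 0 \<and> A *v v = l *\<^sub>R v)" for l
  have f: "f l \<noteq> 0 \<and> A *v f l = l *\<^sub>R f l" if "l \<in> eigenvalues A" for l
    using someI_ex[of "\<lambda>v. v \<noteq> 0 \<and> A *v v = l *\<^sub>R v"] that
    by (simp add: f_def eigenvalues_def)
  have "inj_on f (eigenvalues A)"
    by (rule inj_onI) (metis f scaleR_cancel_right)
  have "pairwise orthogonal (f ` eigenvalues A)"
  proof (rule pairwiseI)
    fix p q assume "p \<in> f ` eigenvalues A" "q \<in> f ` eigenvalues A" "p \<noteq> q"
    then obtain a b where "a \<in> eigenvalues A" "b \<in> eigenvalues A" "a \<noteq> b" "p = f a" "q = f b"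
      by blast
    then show "orthogonal p q"
      unfolding orthogonal_def using f symmetric_eigenvectors_orthogonal[OF sym] by blast
  qed
  moreover have "0 \<notin> f ` eigenvalues A" using f by force
  ultimately have "independent (f ` eigenvalues A)"
    by (rule pairwise_orthogonal_independent)
  then have "finite (f ` eigenvalues A)"
    using independent_bound by blast
  with \<open>inj_on f (eigenvalues A)\<close> show ?thesis
    using finite_imageD by blast
qed

lemma
  fixes A :: "real^'n^'n"
  assumes sym: "transpose A = A"
  shows lambda_max_in_eigenvalues: "lambda_max A \<in> eigenvalues A"
    and quadratic_form_le_lambda_max: "v \<bullet> (A *v v) \<le> lambda_max A * (norm v)^2"
proof -
  obtain u where "norm u = 1" and max: "\<And>v. v \<bullet> (A *v v) \<le> (u \<bullet> (A *v u)) * (norm v)^2"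
    using quadratic_form_attains_max_on_sphere[of A] by blast
  have "A *v u = (u \<bullet> (A *v u)) *\<^sub>R u"
    using rayleigh_maximiser_is_eigenvector[OF sym] \<open>norm u = 1\<close> max .
  moreover have "u \<noteq> 0" using \<open>norm u = 1\<close> by auto
  ultimately have "u \<bullet> (A *v u) \<in> eigenvalues A"
    unfolding eigenvalues_def by blast
  then have "lambda_max A = u \<bullet> (A *v u)"
    unfolding lambda_max_def using finite_eigenvalues_symmetric[OF sym]
    by (intro Max_eqI eigenvalue_le_quadratic_form_bound[OF _ max])
  with \<open>u \<bullet> (A *v u) \<in> eigenvalues A\<close> max
  show "lambda_max A \<in> eigenvalues A" and "v \<bullet> (A *v v) \<le> lambda_max A * (norm v)^2"
    by simp_all
qed

lemma transpose_add: "transpose (A + B) = transpose A + transpose (B :: 'a::semiring_1^'n^'m)"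
  by (simp add: transpose_def vec_eq_iff)

lemma transpose_outer: "transpose (outer x) = outer x"
  by (simp add: transpose_def outer_def vec_eq_iff mult.commute)

lemma outer_mult_vector: "outer x *v v = (x \<bullet> v) *\<^sub>R x"
  by (simp add: vec_eq_iff outer_def matrix_vector_mult_def inner_vec_def sum_distrib_left
      mult.commute mult.left_commute)

lemma transpose_mult_transpose:
  "transpose (P ** transpose P) = P ** transpose (P :: 'a::comm_semiring_1^'m^'n)"
  by (simp add: matrix_transpose_mul)

lemma quadratic_form_mult_transpose:
  fixes P :: "real^'m^'n"
  shows "v \<bullet> ((P ** transpose P) *v v) = (norm (transpose P *v v))^2"
  by (metis dot_lmul_matrix transpose_matrix_vector matrix_vector_mul_assoc
      power2_norm_eq_inner)

lemma lambda_max_mult_transpose_nonneg: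
  fixes P :: "real^'m^'n"
  shows "0 \<le> lambda_max (P ** transpose P)"
proof -
  obtain u where "u \<noteq> 0" and "(P ** transpose P) *v u = lambda_max (P ** transpose P) *\<^sub>R u"
    using lambda_max_in_eigenvalues[OF transpose_mult_transpose] by (auto simp: eigenvalues_def)
  then have "lambda_max (P ** transpose P) * (u \<bullet> u) = (norm (transpose P *v u))^2"
    by (metis inner_scaleR_right quadratic_form_mult_transpose)
  with \<open>u \<noteq> 0\<close> show ?thesis
    by (metis inner_gt_zero_iff zero_le_mult_iff zero_le_power2 not_le)
qed

text \<open>P P^t and P^t P share their largest eigenvalue; only the inequality needed here is
  shown, via Cauchy-Schwarz: |P z|^4 = (z \<bullet> P^t P z)^2 \<le> |z|^2 |P^t (P z)|^2 \<le> |z|^2 \<lambda> |P z|^2.\<close>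
lemma norm_matrix_vector_le_lambda_max:
  fixes P :: "real^'m^'n"
  shows "(norm (P *v z))^2 \<le> lambda_max (P ** transpose P) * (norm z)^2"
proof (cases "P *v z = 0")
  case True
  then show ?thesis by (simp add: lambda_max_mult_transpose_nonneg)
next
  case False
  define lam where "lam = lambda_max (P ** transpose P)"
  define a where "a = norm (P *v z)"
  define d where "d = norm (transpose P *v (P *v z))"
  have "a > 0" using False by (simp add: a_def)
  have "a^2 = z \<bullet> (transpose P *v (P *v z))"
    by (simp only: a_def power2_norm_eq_inner inner_matrix_vector_transpose)
  also have "\<dots> \<le> norm z * d" unfolding d_def by (rule norm_cauchy_schwarz)
  finally have "a^2 \<le> norm z * d" .
  have "d^2 \<le> lam * a^2"
    using quadratic_form_le_lambda_max[OF transpose_mult_transpose[of P], of "P *v z"]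
    by (simp add: lam_def a_def d_def quadratic_form_mult_transpose)
  have "a^2 * a^2 \<le> (norm z * d)^2"
    using power_mono[OF \<open>a^2 \<le> norm z * d\<close> zero_le_power2, of 2]
    by (simp add: power2_eq_square)
  also have "\<dots> \<le> (norm z)^2 * (lam * a^2)"
    using \<open>d^2 \<le> lam * a^2\<close> by (simp add: power_mult_distrib mult_left_mono)
  finally have "a^2 * a^2 \<le> (lam * (norm z)^2) * a^2" by (simp add: algebra_simps)
  then have "a^2 \<le> lam * (norm z)^2"
    by (rule mult_right_le_imp_le) (use \<open>a > 0\<close> in simp)
  then show ?thesis by (simp add: lam_def a_def)
qed

lemma norm_column_le_lambda_max:
  fixes P :: "real^'m^'n"
  shows "(norm (column k P))^2 \<le> lambda_max (P ** transpose P)"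
proof -
  have "P *v axis k 1 = column k P"
    by (simp add: vec_eq_iff matrix_vector_mult_def column_def axis_def if_distrib cong: if_cong)
  then show ?thesis
    using norm_matrix_vector_le_lambda_max[of P "axis k 1"] by (simp add: norm_axis_1)
qed

lemma mult_le_square_from_chain:
  fixes d e y c t :: real
  assumes "0 < d" "0 \<le> y" "0 \<le> c" "t \<noteq> 0"
    and lower: "d * y^2 \<le> e * t^2" and upper: "e * t^2 \<le> \<bar>t\<bar> * c * y"
  shows "e * d \<le> c^2"
proof (cases "y = 0")
  case True
  then have "e \<le> 0" using upper \<open>t \<noteq> 0\<close> by (simp add: mult_le_0_iff)
  then show ?thesis using \<open>0 < d\<close> by (smt (verit) mult_nonpos_nonneg zero_le_power2)
next
  case False
  then have "0 < y" "0 < \<bar>t\<bar>" using \<open>0 \<le> y\<close> \<open>t \<noteq> 0\<close> by simp_all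
  have "d * y * y \<le> \<bar>t\<bar> * c * y" using lower upper by (simp add: power2_eq_square)
  then have dy: "d * y \<le> \<bar>t\<bar> * c" using \<open>0 < y\<close> by simp
  have "\<bar>t\<bar> * (\<bar>t\<bar> * e) \<le> \<bar>t\<bar> * (c * y)"
    using upper by (metis abs_mult_self_eq mult.assoc mult.commute power2_eq_square)
  then have "\<bar>t\<bar> * e \<le> c * y" using \<open>0 < \<bar>t\<bar>\<close> by simp
  then have "\<bar>t\<bar> * e * d \<le> c * (d * y)" using \<open>0 < d\<close> by (simp add: mult_right_mono)
  also have "\<dots> \<le> c * (\<bar>t\<bar> * c)" using dy \<open>0 \<le> c\<close> by (simp add: mult_left_mono)
  finally have "\<bar>t\<bar> * (e * d) \<le> \<bar>t\<bar> * c^2" by (simp add: power2_eq_square algebra_simps)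
  then show ?thesis using \<open>0 < \<bar>t\<bar>\<close> by simp
qed

lemma add_outer_eigenvector_bounds:
  fixes P :: "real^'p^'n" and x :: "real^'n"
  assumes "norm x = 1" and eig: "(P ** transpose P + outer x) *v v = nu *\<^sub>R v"
  defines "y \<equiv> transpose P *v v" and "t \<equiv> x \<bullet> v" and "c \<equiv> transpose P *v x"
  shows "(nu - lambda_max (P ** transpose P)) * (norm y)^2 \<le> (nu - 1) * t^2"
    and "(nu - 1) * t^2 \<le> \<bar>t\<bar> * norm c * norm y"
proof -
  have "(P ** transpose P + outer x) *v v = P *v y + t *\<^sub>R x"
    by (simp only: y_def t_def matrix_vector_mult_add_rdistrib matrix_vector_mul_assoc
        outer_mult_vector)
  with eig have eig': "P *v y + t *\<^sub>R x = nu *\<^sub>R v" by simp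
  have "x \<bullet> (P *v y) + t = nu * t"
    using arg_cong[OF eig', of "(\<bullet>) x"] \<open>norm x = 1\<close>
    by (simp add: inner_add_right t_def norm_eq_1)
  then have cy: "c \<bullet> y = (nu - 1) * t"
    by (simp add: c_def dot_lmul_matrix algebra_simps)
  have "(P *v y) \<bullet> (P *v y) + t * ((P *v y) \<bullet> x) = nu * ((P *v y) \<bullet> v)"
    using arg_cong[OF eig', of "(\<bullet>) (P *v y)"] by (simp add: inner_add_right)
  moreover have "(P *v y) \<bullet> x = c \<bullet> y"
    by (metis c_def inner_commute inner_matrix_vector_transpose)
  moreover have "(P *v y) \<bullet> v = y \<bullet> y"
    by (metis y_def inner_matrix_vector_transpose)
  ultimately have "(norm (P *v y))^2 + t * (c \<bullet> y) = nu * (norm y)^2"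
    by (simp add: power2_norm_eq_inner)
  have "(nu - lambda_max (P ** transpose P)) * (norm y)^2 \<le> nu * (norm y)^2 - (norm (P *v y))^2"
    using norm_matrix_vector_le_lambda_max[of P y] by (simp add: algebra_simps)
  also have "\<dots> = (nu - 1) * t^2"
    using \<open>(norm (P *v y))^2 + t * (c \<bullet> y) = nu * (norm y)^2\<close> cy
    by (simp add: power2_eq_square algebra_simps)
  finally show "(nu - lambda_max (P ** transpose P)) * (norm y)^2 \<le> (nu - 1) * t^2" .
  have "(nu - 1) * t^2 = t * (c \<bullet> y)" using cy by (simp add: power2_eq_square)
  also have "\<dots> \<le> \<bar>t\<bar> * \<bar>c \<bullet> y\<bar>" by (simp flip: abs_mult)
  also have "\<dots> \<le> \<bar>t\<bar> * (norm c * norm y)"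
    by (intro mult_left_mono Cauchy_Schwarz_ineq2) simp
  finally show "(nu - 1) * t^2 \<le> \<bar>t\<bar> * norm c * norm y" by (simp add: mult.assoc)
qed

lemma lambda_max_add_outer_gap:
  fixes P :: "real^'p^'n" and x :: "real^'n"
  assumes "norm x = 1"
    and gt: "lambda_max (P ** transpose P) < lambda_max (P ** transpose P + outer x)"
  shows "(lambda_max (P ** transpose P + outer x) - 1)
           * (lambda_max (P ** transpose P + outer x) - lambda_max (P ** transpose P))
         \<le> (norm (transpose P *v x))^2"
proof -
  define lam where "lam = lambda_max (P ** transpose P)"
  define nu where "nu = lambda_max (P ** transpose P + outer x)"
  have "transpose (P ** transpose P + outer x) = P ** transpose P + outer x"
    by (simp add: transpose_add transpose_outer transpose_mult_transpose)
  then obtain v where "v \<noteq> 0" and eig: "(P ** transpose P + outer x) *v v = nu *\<^sub>R v"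
    using lambda_max_in_eigenvalues by (force simp: eigenvalues_def nu_def)
  note bounds = add_outer_eigenvector_bounds[OF \<open>norm x = 1\<close> eig, folded lam_def]
  have "x \<bullet> v \<noteq> 0"
  proof
    assume "x \<bullet> v = 0"
    with bounds(1) gt have "transpose P *v v = 0"
      by (simp add: lam_def nu_def mult_le_0_iff)
    with eig \<open>x \<bullet> v = 0\<close> \<open>v \<noteq> 0\<close> have "nu = 0"
      by (simp add: matrix_vector_mult_add_rdistrib outer_mult_vector
          flip: matrix_vector_mul_assoc)
    with gt lambda_max_mult_transpose_nonneg[of P] show False by (simp add: nu_def)
  qed
  with bounds gt show ?thesis
    unfolding lam_def nu_def by (intro mult_le_square_from_chain) simp_all
qed

lemma lambda_max_add_outer_le:
  fixes P :: "real^'p^'n" and x :: "real^'n"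
  assumes "norm x = 1" and gt1: "1 < lambda_max (P ** transpose P)"
    and c: "(norm (transpose P *v x))^2 \<le> b"
  shows "lambda_max (P ** transpose P + outer x)
         \<le> lambda_max (P ** transpose P) + b / (lambda_max (P ** transpose P) - 1)"
proof -
  define lam where "lam = lambda_max (P ** transpose P)"
  define nu where "nu = lambda_max (P ** transpose P + outer x)"
  have "0 \<le> b" using c by (meson order_trans zero_le_power2)
  show ?thesis
  proof (cases "nu \<le> lam")
    case True
    have "0 \<le> b / (lam - 1)" using \<open>0 \<le> b\<close> gt1 by (simp add: lam_def)
    with True show ?thesis by (simp add: lam_def nu_def)
  next
    case False
    have "(nu - lam) * (lam - 1) \<le> (nu - 1) * (nu - lam)"
      using False by (simp add: mult.commute mult_left_mono)
    also have "\<dots> \<le> b"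
      using lambda_max_add_outer_gap[of x P] \<open>norm x = 1\<close> False c by (simp add: lam_def nu_def)
    finally have "nu - lam \<le> b / (lam - 1)"
      using gt1 by (simp add: lam_def pos_le_divide_eq)
    then show ?thesis by (simp add: lam_def nu_def)
  qed
qed

lemma lambda_max_add_outer_orthogonal_le:
  fixes P :: "real^'p^'n" and x :: "real^'n"
  assumes "norm x = 1" and "transpose P *v x = 0"
  shows "lambda_max (P ** transpose P + outer x) \<le> max (lambda_max (P ** transpose P)) 1"
proof (cases "lambda_max (P ** transpose P + outer x) \<le> lambda_max (P ** transpose P)")
  case False
  then have "(lambda_max (P ** transpose P + outer x) - 1)
      * (lambda_max (P ** transpose P + outer x) - lambda_max (P ** transpose P)) \<le> 0"
    using lambda_max_add_outer_gap[of x P] assms by simp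
  with False show ?thesis by (simp add: mult_le_0_iff)
qed simp

lemma finite_coherence_candidates:
  fixes X :: "real^'p^'n"
  shows "finite (insert 0 {\<bar>column k X \<bullet> column l X\<bar> | k l. k \<noteq> l})"
proof -
  have "{\<bar>column k X \<bullet> column l X\<bar> | k l. k \<noteq> l}
      \<subseteq> (\<lambda>(k, l). \<bar>column k X \<bullet> column l X\<bar>) ` UNIV"
    by auto
  then show ?thesis by (meson finite_imageI finite_insert finite_subset finite)
qed

lemma abs_inner_columns_le_coherence:
  "k \<noteq> l \<Longrightarrow> \<bar>column k X \<bullet> column l X\<bar> \<le> coherence X"
  unfolding coherence_def by (rule Max_ge[OF finite_coherence_candidates]) blast

lemma coherence_nonneg: "0 \<le> coherence X"
  unfolding coherence_def by (rule Max_ge[OF finite_coherence_candidates]) blast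

lemma coherence_le_1:
  assumes "\<And>k. norm (column k X) = 1"
  shows "coherence X \<le> 1"
  unfolding coherence_def
proof (rule Max.boundedI[OF finite_coherence_candidates])
  fix a assume "a \<in> insert 0 {\<bar>column k X \<bullet> column l X\<bar> | k l. k \<noteq> l}"
  then consider "a = 0" | k l where "a = \<bar>column k X \<bullet> column l X\<bar>" by blast
  then show "a \<le> 1"
    by cases (use Cauchy_Schwarz_ineq2[of "column k X" "column l X" for k l] assms in auto)
qed simp

lemma column_colsel: "k \<in> T \<Longrightarrow> column k (colsel X T) = column k X"
  by (simp add: column_def colsel_def)

lemma colsel_empty: "colsel X {} = 0"
  by (simp add: colsel_def vec_eq_iff)

lemma norm_transpose_colsel_column_le:
  fixes X :: "real^'p^'n"
  assumes "j \<notin> T"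
  shows "(norm (transpose (colsel X T) *v column j X))^2 \<le> real (card T) * (coherence X)^2"
proof -
  define c where "c = transpose (colsel X T) *v column j X"
  have c: "c $ k = (if k \<in> T then column k X \<bullet> column j X else 0)" for k
    by (simp add: c_def colsel_def column_def inner_vec_def vector_matrix_mult_def mult.commute)
  have "(c $ k)^2 \<le> (if k \<in> T then (coherence X)^2 else 0)" for k
  proof (cases "k \<in> T")
    case True
    with assms have "\<bar>c $ k\<bar> \<le> \<bar>coherence X\<bar>"
      using c abs_inner_columns_le_coherence[of k j X] coherence_nonneg[of X] by auto
    with True show ?thesis by (simp add: abs_le_square_iff)
  qed (simp add: c)
  then have "(\<Sum>k\<in>UNIV. (c $ k)^2) \<le> (\<Sum>k\<in>UNIV. if k \<in> T then (coherence X)^2 else 0)"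
    by (rule sum_mono)
  moreover have "(norm c)^2 = (\<Sum>k\<in>UNIV. (c $ k)^2)"
    by (simp add: norm_vec_def L2_set_def sum_nonneg)
  ultimately have "(norm c)^2 \<le> (\<Sum>k\<in>UNIV. if k \<in> T then (coherence X)^2 else 0)"
    by simp
  then show ?thesis by (simp add: c_def sum.If_cases)
qed

lemma coherence_gap_le_epsilon:
  fixes s mu N l lam :: real
  assumes "1 \<le> s" "0 \<le> mu" "mu \<le> 1" "1 \<le> N" "1 < l" "1 < lam"
  shows "s * mu^2 / (lam - 1)
         \<le> (1/2) * (s^3 * mu^2 * N^2 + 4 * s powr (3/2) * mu * N * l) / (2 * (lam - 1))"
proof -
  have "s * mu^2 \<le> s powr (3/2) * mu * N * l"
  proof -
    have "s * mu^2 \<le> s * mu" using assms by (simp add: power2_eq_square mult_left_le)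
    also have "\<dots> \<le> s powr (3/2) * mu"
      using assms powr_mono[of 1 "3/2" s] by (simp add: mult_right_mono)
    also have "\<dots> \<le> s powr (3/2) * mu * (N * l)"
      using assms mult_mono[of 1 N 1 l] mult_left_mono[of 1 "N * l" "s powr (3/2) * mu"]
      by simp
    finally show ?thesis by (simp add: mult.assoc)
  qed
  moreover have "0 \<le> s^3 * mu^2 * N^2" using assms by simp
  ultimately have "4 * (s * mu^2) \<le> s^3 * mu^2 * N^2 + 4 * s powr (3/2) * mu * N * l"
    by linarith
  have "s * mu^2 / (lam - 1) = 4 * (s * mu^2) / (4 * (lam - 1))"
    by (rule mult_divide_mult_cancel_left[symmetric]) simp
  also have "\<dots> \<le> (s^3 * mu^2 * N^2 + 4 * s powr (3/2) * mu * N * l) / (4 * (lam - 1))"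
    using \<open>4 * (s * mu^2) \<le> _\<close> \<open>1 < lam\<close> by (intro divide_right_mono) simp_all
  also have "\<dots> = (1/2) * (s^3 * mu^2 * N^2 + 4 * s powr (3/2) * mu * N * l) / (2 * (lam - 1))"
    by simp
  finally show ?thesis .
qed

theorem mainTheorem3:
  fixes X :: "real^'p^'n" and T0 :: "'p set" and j :: 'p and lt :: real
  assumes unit_cols: "\<And>k. norm (column k X) = 1"
    and j_notin: "j \<notin> T0"
    and lt_ge: "lt \<ge> lambda_max (colsel X T0 ** transpose (colsel X T0))"
    and lt_gt1: "lt > 1"
    and defined: "lambda_max (colsel X T0 ** transpose (colsel X T0)) \<noteq> 1"
  shows "lambda_max (colsel X T0 ** transpose (colsel X T0) + outer (column j X))
      \<le> lt + (1/2) * ((real (card T0))^3 * (coherence X)^2 * (onorm (\<lambda>v. colsel X T0 *v v))^2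
                 + 4 * (real (card T0)) powr (3/2) * coherence X * onorm (\<lambda>v. colsel X T0 *v v) * lt)
               / (2 * (lambda_max (colsel X T0 ** transpose (colsel X T0)) - 1))"
proof -
  let ?P = "colsel X T0" and ?x = "column j X" and ?s = "real (card T0)" and ?mu = "coherence X"
  let ?lam = "lambda_max (?P ** transpose ?P)" and ?N = "onorm (\<lambda>v. ?P *v v)"
  show ?thesis
  proof (cases "T0 = {}")
    case True
    then have "lambda_max (?P ** transpose ?P + outer ?x) \<le> max ?lam 1"
      using unit_cols by (intro lambda_max_add_outer_orthogonal_le) (simp_all add: colsel_empty)
    with True lt_ge lt_gt1 show ?thesis by simp
  next
    case False
    then obtain k where "k \<in> T0" by blast
    then have "1 \<le> ?lam"
      using norm_column_le_lambda_max[of k ?P] by (simp add: column_colsel unit_cols)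
    with defined have "1 < ?lam" by simp
    have "1 \<le> ?N"
      using norm_column_le_onorm[of k ?P] \<open>k \<in> T0\<close> by (simp add: column_colsel unit_cols)
    have "1 \<le> ?s" using False by (simp add: Suc_le_eq card_gt_0_iff)
    have "lambda_max (?P ** transpose ?P + outer ?x) \<le> ?lam + ?s * ?mu^2 / (?lam - 1)"
      by (rule lambda_max_add_outer_le[OF unit_cols \<open>1 < ?lam\<close>
            norm_transpose_colsel_column_le[OF j_notin]])
    also have "\<dots> \<le> lt + (1/2) * (?s^3 * ?mu^2 * ?N^2 + 4 * ?s powr (3/2) * ?mu * ?N * lt)
                          / (2 * (?lam - 1))"
      using coherence_gap_le_epsilon[OF \<open>1 \<le> ?s\<close> coherence_nonneg coherence_le_1[OF unit_cols]
          \<open>1 \<le> ?N\<close> lt_gt1 \<open>1 < ?lam\<close>] lt_ge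
      by linarith
    finally show ?thesis .
  qed
qed

end
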